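(* Let $\mathbf{X}=(\mathbf{X}_0',\mathbf{X}_1',\mathbf{X}_2')'$ have a matrix variate spherical distribution with density generator $h$, $\mathbf{X}_i\in\mathbb{R}^{n_i\times m}$, $n_i\ge m\ge1$, $i=0,1,2$, $N=n_0+n_1+n_2$. Let $V=\|\mathbf{X}_0\|^2$, $V_0=V+\|\mathbf{X}_2\|^2$, $\mathbf{T}=V^{-1/2}\mathbf{X}_1$ and $\mathbf{R}=V_0^{-1/2}\mathbf{X}_2$ (so $\|\mathbf{R}\|^2<1$ and $V=V_0(1-\|\mathbf{R}\|^2)$). Then: (a) the joint density of $(V_0,\mathbf{T},\mathbf{R})$ on $\{v_0>0,\ \mathbf{T}\in\mathbb{R}^{n_1\times m},\ \mathbf{R}\in\mathbb{R}^{n_2\times m},\ \|\mathbf{R}\|^2<1\}$ with respect to $(dv_0)\wedge(d\mathbf{T})\wedge(d\mathbf{R})$ is $$\frac{\pi^{n_0m/2}\,v_0^{Nm/2-1}}{\Gamma[n_0m/2]}\,h\big\{v_0\big[1+(1-\|\mathbf{R}\|^2)\|\mathbf{T}\|^2\big]\big\}\,(1-\|\mathbf{R}\|^2)^{(n_0+n_1)m/2-1};$$ (b) the marginal density of $(\mathbf{T},\mathbf{R})$ with respect to $(d\mathbf{T})\wedge(d\mathbf{R})$ is $$\frac{\Gamma[Nm/2]}{\pi^{(N-n_0)m/2}\Gamma[n_0m/2]}\big[1+(1-\|\mathbf{R}\|^2)\|\mathbf{T}\|^2\big]^{-Nm/2}(1-\|\mathbf{R}\|^2)^{(n_0+n_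1)m/2-1}.$$
   Context: Standing setting: $\mathbf{X}\in\mathbb{R}^{N\times m}$ has a matrix variate spherical distribution with density generator $h$ if it has density $h(\operatorname{tr}\mathbf{X}'\mathbf{X})$ with respect to Lebesgue measure $(d\mathbf{X})$ on $\mathbb{R}^{N\times m}$, where $h:[0,\infty)\to[0,\infty)$ is measurable with $\int_{\mathbb{R}^{N\times m}}h(\operatorname{tr}\mathbf{X}'\mathbf{X})(d\mathbf{X})=1$. $\|\mathbf{A}\|=\sqrt{\operatorname{tr}\mathbf{A}'\mathbf{A}}$ is the Frobenius norm; $(d\mathbf{A})$ is Lebesgue measure on the entries of $\mathbf{A}$. $\Gamma[\cdot]$ is the Gamma function. *)

theory Defs
  imports "HOL-Probability.Probability"
begin

text \<open>Matrices in R^(n x m) are rendered as real^'m^'n; the norm on this type is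
  the Frobenius norm (square root of the sum of squares of all entries).\<close>

end

theory Submission
  imports Defs
begin

text \<open>
  The joint density is obtained by a chain of fibrewise substitutions, each of which
  is a Fubini argument for Lebesgue measure on a product type. Since the density of \<open>X\<close> is radial,
  polar coordinates in \<open>X\<^sub>0\<close> (the squared norm of a Lebesgue-distributed vector in dimension \<open>d\<close>
  has density \<open>\<pi>\<^bsup>d/2\<^esup> v\<^bsup>d/2-1\<^esup> / \<Gamma>(d/2)\<close>) replace \<open>X\<^sub>0\<close> by \<open>V\<close>; the scaling
  \<open>X\<^sub>1 = \<surd>V T\<close> contributes the Jacobian \<open>V\<^bsup>n\<^sub>1m/2\<^esup>\<close>; the shift \<open>V\<^sub>0 = V + \<parallel>X\<^sub>2\<parallel>\<^sup>2\<close>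
  is measure preserving; and the scaling \<open>X\<^sub>2 = \<surd>V\<^sub>0 R\<close> contributes \<open>V\<^sub>0\<^bsup>n\<^sub>2m/2\<^esup>\<close>.
  For the marginal of \<open>(T, R)\<close>, the substitution \<open>u = v\<^sub>0 [1 + (1 - \<parallel>R\<parallel>\<^sup>2) \<parallel>T\<parallel>\<^sup>2]\<close> reduces the
  \<open>v\<^sub>0\<close>-integral to \<open>\<integral>\<^sub>0\<^sup>\<infinity> u\<^bsup>Nm/2-1\<^esup> h(u) du\<close>, which by polar coordinates for the whole of \<open>X\<close>
  equals \<open>\<Gamma>(Nm/2) / \<pi>\<^bsup>Nm/2\<^esup>\<close> because \<open>h\<close> is a density generator.
\<close>

lemma measure_eqI_atMost:
  fixes M N :: "real measure"
  assumes sets: "sets M = sets borel" "sets N = sets borel"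
  assumes fin: "\<And>x. emeasure M {..x} < \<infinity>"
  assumes eq: "\<And>x. emeasure M {..x} = emeasure N {..x}"
  shows "M = N"
proof (rule measure_eqI_generator_eq_countable)
  let ?E = "range (atMost :: real \<Rightarrow> real set)"
  show "Int_stable ?E"
    by (auto simp: Int_stable_def)
  show "?E \<subseteq> Pow UNIV" "sets M = sigma_sets UNIV ?E" "sets N = sigma_sets UNIV ?E"
    unfolding sets borel_eq_atMost by auto
  show "(\<Union>q\<in>\<rat>. {..q}) = (UNIV :: real set)"
    using Rats_no_top_le by blast
  show "atMost ` \<rat> \<subseteq> ?E" "\<And>a. a \<in> atMost ` \<rat> \<Longrightarrow> emeasure M a \<noteq> \<infinity>"
    using fin by (auto simp: less_top)
qed (auto intro: eq countable_rat)

lemma sqrt_power_eq_powr: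
  assumes "x \<ge> 0" "n > 0"
  shows "sqrt x ^ n = x powr (real n / 2)"
proof (cases "x = 0")
  case False
  with assms have "sqrt x ^ n = (x powr (1/2)) ^ n" by (simp add: powr_half_sqrt)
  also have "\<dots> = x powr (real n / 2)"
    using assms False by (simp add: powr_realpow[symmetric] powr_powr)
  finally show ?thesis .
qed (use assms in simp)

section \<open>Polar coordinates\<close>

lemma emeasure_lborel_norm_square_atMost:
  "emeasure lborel {x::'a::euclidean_space. (norm x)\<^sup>2 \<le> r} =
     (if r < 0 then 0 else ennreal (unit_ball_vol DIM('a) * r powr (DIM('a) / 2)))"
proof (cases "r < 0")
  case True
  then have "{x::'a. (norm x)\<^sup>2 \<le> r} = {}"
    by (auto simp: not_le intro: less_le_trans[OF _ zero_le_power2])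
  with True show ?thesis by simp
next
  case False
  have "(norm x)\<^sup>2 \<le> r" if "norm x \<le> sqrt r" for x :: 'a
    using False power_mono[OF that norm_ge_zero, of 2] by simp
  then have "{x::'a. (norm x)\<^sup>2 \<le> r} = cball 0 (sqrt r)"
    by (auto simp: real_le_rsqrt dist_norm)
  with False show ?thesis
    by (simp add: emeasure_cball sqrt_power_eq_powr)
qed

lemma distr_lborel_norm_square:
  defines "d \<equiv> real DIM('a::euclidean_space)"
  shows "distr (lborel :: 'a measure) borel (\<lambda>x. (norm x)\<^sup>2) =
    density lborel (\<lambda>v. ennreal (indicator {0<..} v * (pi powr (d/2) / Gamma (d/2) * v powr (d/2 - 1))))"
    (is "?L = density lborel ?f")
proof (rule measure_eqI_atMost)
  have d: "d \<ge> 1" unfolding d_def using DIM_positive[where 'a='a] by linarith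
  have L: "emeasure ?L {..r} = (if r < 0 then 0 else ennreal (unit_ball_vol d * r powr (d/2)))" for r
    by (simp add: emeasure_distr vimage_def emeasure_lborel_norm_square_atMost d_def)
  show "emeasure ?L {..r} < \<infinity>" for r
    using L[of r] by simp
  show "emeasure ?L {..r} = emeasure (density lborel ?f) {..r}" for r
  proof (cases "r < 0")
    case True
    have "emeasure (density lborel ?f) {..r} = (\<integral>\<^sup>+ v. ?f v * indicator {..r} v \<partial>lborel)"
      by (subst emeasure_density) auto
    also have "\<dots> = (\<integral>\<^sup>+ (v::real). 0 \<partial>lborel)"
      using True by (intro nn_integral_cong) (auto split: split_indicator)
    finally show ?thesis
      using True L[of r] by simp
  next
    case False
    have Gamma_pos: "Gamma (d/2) > 0"
      using d by (intro Gamma_real_pos) auto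
    have "d/2 \<notin> \<int>\<^sub>\<le>\<^sub>0"
      using d by (auto dest: nonpos_Ints_nonpos)
    then have ball_vol: "unit_ball_vol d = pi powr (d/2) / ((d/2) * Gamma (d/2))"
      by (simp add: unit_ball_vol_def Gamma_plus1)
    have vol: "pi powr (d/2) / Gamma (d/2) * (r powr (d/2 - 1 + 1) / (d/2 - 1 + 1)) = unit_ball_vol d * r powr (d/2)"
      unfolding ball_vol using d Gamma_pos by (simp add: field_simps)
    have "emeasure (density lborel ?f) {..r} = (\<integral>\<^sup>+ v. ?f v * indicator {..r} v \<partial>lborel)"
      by (subst emeasure_density) auto
    also have "\<dots> =
        (\<integral>\<^sup>+ v. ennreal (pi powr (d/2) / Gamma (d/2) * v powr (d/2 - 1)) * indicator {0..r} v \<partial>lborel)"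
      by (intro nn_integral_cong) (auto split: split_indicator)
    also have "\<dots> = ennreal (pi powr (d/2) / Gamma (d/2) * (r powr (d/2 - 1 + 1) / (d/2 - 1 + 1)))"
      using False d Gamma_pos
      by (intro nn_integral_has_integral_lebesgue' has_integral_mult_right has_integral_powr_from_0) auto
    finally show ?thesis
      using False L[of r] vol by simp
  qed
qed simp_all

lemma nn_integral_lborel_norm_square:
  fixes F :: "real \<Rightarrow> ennreal"
  defines "d \<equiv> real DIM('a::euclidean_space)"
  assumes [measurable]: "F \<in> borel_measurable borel"
  shows "(\<integral>\<^sup>+x. F ((norm x)\<^sup>2) \<partial>(lborel :: 'a measure)) =
    (\<integral>\<^sup>+v. ennreal (indicator {0<..} v * (pi powr (d/2) / Gamma (d/2) * v powr (d/2 - 1))) * F v \<partial>lborel)"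
proof -
  have "(\<integral>\<^sup>+x. F ((norm x)\<^sup>2) \<partial>(lborel :: 'a measure)) = (\<integral>\<^sup>+v. F v \<partial>distr lborel borel (\<lambda>x::'a. (norm x)\<^sup>2))"
    by (simp add: nn_integral_distr)
  also have "\<dots> = (\<integral>\<^sup>+v. ennreal (indicator {0<..} v * (pi powr (d/2) / Gamma (d/2) * v powr (d/2 - 1))) * F v \<partial>lborel)"
    unfolding distr_lborel_norm_square d_def by (subst nn_integral_density) auto
  finally show ?thesis .
qed

lemma nn_integral_lborel_normalised_radial:
  fixes h :: "real \<Rightarrow> real"
  defines "d \<equiv> real DIM('a::euclidean_space)"
  assumes [measurable]: "h \<in> borel_measurable borel"
    and "(\<integral>\<^sup>+x. ennreal (h ((norm x)\<^sup>2)) \<partial>(lborel :: 'a measure)) = 1"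
  shows "(\<integral>\<^sup>+u. ennreal (indicator {0<..} u * u powr (d/2 - 1)) * ennreal (h u) \<partial>lborel) =
    ennreal (Gamma (d/2) / pi powr (d/2))"
proof -
  define c where "c = pi powr (d/2) / Gamma (d/2)"
  have "c > 0"
    unfolding c_def d_def by (intro divide_pos_pos Gamma_real_pos) auto
  have "1 = (\<integral>\<^sup>+x. ennreal (h ((norm x)\<^sup>2)) \<partial>(lborel :: 'a measure))"
    using assms(3) ..
  also have "\<dots> = (\<integral>\<^sup>+v. ennreal (indicator {0<..} v * (c * v powr (d/2 - 1))) * ennreal (h v) \<partial>lborel)"
    unfolding c_def d_def by (rule nn_integral_lborel_norm_square) measurable
  also have "\<dots> = ennreal c * (\<integral>\<^sup>+u. ennreal (indicator {0<..} u * u powr (d/2 - 1)) * ennreal (h u) \<partial>lborel)"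
    (is "_ = ennreal c * ?J")
    using \<open>c > 0\<close> by (subst nn_integral_cmult[symmetric])
      (auto intro!: nn_integral_cong simp: ennreal_mult' mult_ac split: split_indicator)
  finally have normalised: "ennreal c * ?J = 1" ..
  have "?J = ennreal (1/c) * (ennreal c * ?J)"
    using \<open>c > 0\<close> by (simp add: ennreal_mult[symmetric] mult.assoc[symmetric])
  then show ?thesis
    unfolding normalised by (simp add: c_def)
qed

lemma nn_integral_powr_dilation:
  fixes f :: "real \<Rightarrow> ennreal"
  assumes [measurable]: "f \<in> borel_measurable borel" and "k > 0"
  shows "(\<integral>\<^sup>+v. ennreal (indicator {0<..} v * v powr (a - 1)) * f (v * k) \<partial>lborel) =
    ennreal (k powr (- a)) * (\<integral>\<^sup>+u. ennreal (indicator {0<..} u * u powr (a - 1)) * f u \<partial>lborel)"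
proof -
  have "(\<integral>\<^sup>+v. ennreal (indicator {0<..} v * v powr (a - 1)) * f (v * k) \<partial>lborel) =
      ennreal \<bar>1/k\<bar> * (\<integral>\<^sup>+u. ennreal (indicator {0<..} (0 + 1/k * u) * (0 + 1/k * u) powr (a - 1)) *
        f ((0 + 1/k * u) * k) \<partial>lborel)"
    using \<open>k > 0\<close> by (intro nn_integral_real_affine) auto
  also have "\<dots> = (\<integral>\<^sup>+u. ennreal (k powr (- a)) * (ennreal (indicator {0<..} u * u powr (a - 1)) * f u) \<partial>lborel)"
  proof (subst nn_integral_cmult[symmetric], measurable, intro nn_integral_cong)
    fix u :: real
    have "1/k * (1/k * u) powr (a - 1) = k powr (- a) * u powr (a - 1)" if "u > 0"
      using that \<open>k > 0\<close> by (simp add: powr_divide powr_diff powr_minus field_simps)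
    then show "ennreal \<bar>1/k\<bar> * (ennreal (indicator {0<..} (0 + 1/k * u) * (0 + 1/k * u) powr (a - 1)) *
        f ((0 + 1/k * u) * k)) = ennreal (k powr (- a)) * (ennreal (indicator {0<..} u * u powr (a - 1)) * f u)"
      using \<open>k > 0\<close> by (auto simp: ennreal_mult'[symmetric] mult.assoc[symmetric] zero_less_divide_iff split: split_indicator)
  qed
  finally show ?thesis
    by (simp add: nn_integral_cmult)
qed

section \<open>Fibrewise substitutions for Lebesgue measure on products\<close>

lemma nn_integral_lborel_scale:
  fixes F :: "'a::euclidean_space \<Rightarrow> ennreal"
  assumes [measurable]: "F \<in> borel_measurable borel" and "c > 0"
  shows "(\<integral>\<^sup>+x. F x \<partial>lborel) = ennreal (c ^ DIM('a)) * (\<integral>\<^sup>+x. F (c *\<^sub>R x) \<partial>lborel)"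
  using \<open>c > 0\<close> by (subst lborel_affine[of c 0])
    (simp_all add: nn_integral_density nn_integral_distr nn_integral_cmult)

lemma nn_integral_lborel_prod_fst:
  fixes f :: "'a::euclidean_space \<times> 'b::euclidean_space \<Rightarrow> ennreal"
  assumes "f \<in> borel_measurable borel"
  shows "(\<integral>\<^sup>+p. f p \<partial>lborel) = (\<integral>\<^sup>+x. \<integral>\<^sup>+y. f (x, y) \<partial>lborel \<partial>lborel)"
proof -
  have "f \<in> borel_measurable (lborel \<Otimes>\<^sub>M lborel)"
    using assms by (simp add: lborel_prod)
  then show ?thesis
    using lborel.nn_integral_fst[of f lborel] by (simp add: lborel_prod)
qed

lemma nn_integral_lborel_prod_snd:
  fixes f :: "'a::euclidean_space \<times> 'b::euclidean_space \<Rightarrow> ennreal"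
  assumes "f \<in> borel_measurable borel"
  shows "(\<integral>\<^sup>+p. f p \<partial>lborel) = (\<integral>\<^sup>+y. \<integral>\<^sup>+x. f (x, y) \<partial>lborel \<partial>lborel)"
  using assms pair_sigma_finite.nn_integral_snd[of lborel lborel f]
  by (simp add: lborel_prod pair_sigma_finite_def lborel.sigma_finite_measure_axioms)

lemma nn_integral_lborel_prod_cong_fst:
  fixes f :: "'a::euclidean_space \<times> 'b::euclidean_space \<Rightarrow> ennreal"
    and g :: "'a \<times> 'c::euclidean_space \<Rightarrow> ennreal"
  assumes "f \<in> borel_measurable borel" "g \<in> borel_measurable borel"
    and "\<And>x. (\<integral>\<^sup>+y. f (x, y) \<partial>lborel) = (\<integral>\<^sup>+y. g (x, y) \<partial>lborel)"
  shows "(\<integral>\<^sup>+p. f p \<partial>lborel) = (\<integral>\<^sup>+p. g p \<partial>lborel)"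
  using assms by (simp add: nn_integral_lborel_prod_fst)

lemma nn_integral_lborel_prod_cong_snd:
  fixes f :: "'a::euclidean_space \<times> 'c::euclidean_space \<Rightarrow> ennreal"
    and g :: "'b::euclidean_space \<times> 'c \<Rightarrow> ennreal"
  assumes "f \<in> borel_measurable borel" "g \<in> borel_measurable borel"
    and "\<And>y. (\<integral>\<^sup>+x. f (x, y) \<partial>lborel) = (\<integral>\<^sup>+x. g (x, y) \<partial>lborel)"
  shows "(\<integral>\<^sup>+p. f p \<partial>lborel) = (\<integral>\<^sup>+p. g p \<partial>lborel)"
  using assms by (simp add: nn_integral_lborel_prod_snd)

lemma nn_integral_lborel_prod_scale_fst:
  fixes G :: "'a::euclidean_space \<times> 'b::euclidean_space \<Rightarrow> ennreal"
  assumes G: "G \<in> borel_measurable borel" and "c > 0"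
  shows "(\<integral>\<^sup>+p. G p \<partial>lborel) = ennreal (c ^ DIM('a)) * (\<integral>\<^sup>+p. G (c *\<^sub>R fst p, snd p) \<partial>lborel)"
proof -
  have [measurable]: "(\<lambda>x. \<integral>\<^sup>+y. G (x, y) \<partial>lborel) \<in> borel_measurable borel"
    "(\<lambda>p. G (c *\<^sub>R fst p, snd p)) \<in> borel_measurable borel"
    using G unfolding borel_prod[symmetric] by measurable
  have "(\<integral>\<^sup>+p. G p \<partial>lborel) = (\<integral>\<^sup>+x. \<integral>\<^sup>+y. G (x, y) \<partial>lborel \<partial>lborel)"
    using G by (rule nn_integral_lborel_prod_fst)
  also have "\<dots> = ennreal (c ^ DIM('a)) * (\<integral>\<^sup>+x. \<integral>\<^sup>+y. G (c *\<^sub>R x, y) \<partial>lborel \<partial>lborel)"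
    using \<open>c > 0\<close> by (rule nn_integral_lborel_scale[rotated]) measurable
  finally show ?thesis
    by (simp add: nn_integral_lborel_prod_fst)
qed

lemma nn_integral_lborel_prod_scale_snd:
  fixes G :: "'a::euclidean_space \<times> 'b::euclidean_space \<Rightarrow> ennreal"
  assumes G: "G \<in> borel_measurable borel" and "c > 0"
  shows "(\<integral>\<^sup>+p. G p \<partial>lborel) = ennreal (c ^ DIM('b)) * (\<integral>\<^sup>+p. G (fst p, c *\<^sub>R snd p) \<partial>lborel)"
proof -
  have [measurable]: "(\<lambda>y. \<integral>\<^sup>+x. G (x, y) \<partial>lborel) \<in> borel_measurable borel"
    "(\<lambda>p. G (fst p, c *\<^sub>R snd p)) \<in> borel_measurable borel"
    using G unfolding borel_prod[symmetric] by measurable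
  have "(\<integral>\<^sup>+p. G p \<partial>lborel) = (\<integral>\<^sup>+y. \<integral>\<^sup>+x. G (x, y) \<partial>lborel \<partial>lborel)"
    using G by (rule nn_integral_lborel_prod_snd)
  also have "\<dots> = ennreal (c ^ DIM('b)) * (\<integral>\<^sup>+y. \<integral>\<^sup>+x. G (x, c *\<^sub>R y) \<partial>lborel \<partial>lborel)"
    using \<open>c > 0\<close> by (rule nn_integral_lborel_scale[rotated]) measurable
  finally show ?thesis
    by (simp add: nn_integral_lborel_prod_snd)
qed

lemma nn_integral_lborel_norm_square_fst:
  fixes F :: "real \<times> 'b::euclidean_space \<Rightarrow> ennreal"
  defines "d \<equiv> real DIM('a::euclidean_space)"
  assumes F: "F \<in> borel_measurable borel"
  shows "(\<integral>\<^sup>+p. F ((norm (fst p))\<^sup>2, snd p) \<partial>(lborel :: ('a \<times> 'b) measure)) =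
    (\<integral>\<^sup>+q. ennreal (indicator {0<..} (fst q) * (pi powr (d/2) / Gamma (d/2) * fst q powr (d/2 - 1))) * F q \<partial>lborel)"
proof (rule nn_integral_lborel_prod_cong_snd)
  show "(\<lambda>p::'a \<times> 'b. F ((norm (fst p))\<^sup>2, snd p)) \<in> borel_measurable borel"
    "(\<lambda>q. ennreal (indicator {0<..} (fst q) * (pi powr (d/2) / Gamma (d/2) * fst q powr (d/2 - 1))) * F q) \<in> borel_measurable borel"
    using F unfolding borel_prod[symmetric] by measurable
  fix y :: 'b
  have [measurable]: "(\<lambda>v. F (v, y)) \<in> borel_measurable borel"
    using F unfolding borel_prod[symmetric] by measurable
  show "(\<integral>\<^sup>+x. F ((norm (fst (x, y)))\<^sup>2, snd (x, y)) \<partial>(lborel :: 'a measure)) =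
    (\<integral>\<^sup>+v. ennreal (indicator {0<..} (fst (v, y)) * (pi powr (d/2) / Gamma (d/2) * fst (v, y) powr (d/2 - 1))) * F (v, y) \<partial>lborel)"
    unfolding fst_conv snd_conv d_def by (rule nn_integral_lborel_norm_square) measurable
qed

lemma nn_integral_lborel_scale_fibre_fst:
  fixes F :: "real \<times> 'a::euclidean_space \<times> 'b::euclidean_space \<Rightarrow> ennreal"
  assumes F: "F \<in> borel_measurable borel" and vanish: "\<And>p. fst p \<le> 0 \<Longrightarrow> F p = 0"
  shows "(\<integral>\<^sup>+p. F p \<partial>lborel) =
    (\<integral>\<^sup>+p. ennreal (fst p powr (DIM('a) / 2)) * F (fst p, sqrt (fst p) *\<^sub>R fst (snd p), snd (snd p)) \<partial>lborel)"
proof (rule nn_integral_lborel_prod_cong_fst)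
  show "F \<in> borel_measurable borel"
    "(\<lambda>p. ennreal (fst p powr (DIM('a) / 2)) * F (fst p, sqrt (fst p) *\<^sub>R fst (snd p), snd (snd p))) \<in> borel_measurable borel"
    using F unfolding borel_prod[symmetric] by measurable
  fix v :: real
  have [measurable]: "(\<lambda>y. F (v, y)) \<in> borel_measurable borel"
    "(\<lambda>y. F (v, sqrt v *\<^sub>R fst y, snd y)) \<in> borel_measurable borel"
    using F unfolding borel_prod[symmetric] by measurable
  show "(\<integral>\<^sup>+y. F (v, y) \<partial>lborel) =
    (\<integral>\<^sup>+y. ennreal (fst (v, y) powr (DIM('a) / 2)) * F (fst (v, y), sqrt (fst (v, y)) *\<^sub>R fst (snd (v, y)), snd (snd (v, y))) \<partial>lborel)"
  proof (cases "v > 0")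
    case True
    have "(\<integral>\<^sup>+y. F (v, y) \<partial>lborel) = ennreal (sqrt v ^ DIM('a)) * (\<integral>\<^sup>+y. F (v, sqrt v *\<^sub>R fst y, snd y) \<partial>lborel)"
      using True by (intro nn_integral_lborel_prod_scale_fst) auto
    with True show ?thesis
      by (simp add: nn_integral_cmult sqrt_power_eq_powr)
  qed (simp add: vanish)
qed

lemma nn_integral_lborel_scale_fibre_snd:
  fixes F :: "real \<times> 'a::euclidean_space \<times> 'b::euclidean_space \<Rightarrow> ennreal"
  assumes F: "F \<in> borel_measurable borel" and vanish: "\<And>p. fst p \<le> 0 \<Longrightarrow> F p = 0"
  shows "(\<integral>\<^sup>+p. F p \<partial>lborel) =
    (\<integral>\<^sup>+p. ennreal (fst p powr (DIM('b) / 2)) * F (fst p, fst (snd p), sqrt (fst p) *\<^sub>R snd (snd p)) \<partial>lborel)"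
proof (rule nn_integral_lborel_prod_cong_fst)
  show "F \<in> borel_measurable borel"
    "(\<lambda>p. ennreal (fst p powr (DIM('b) / 2)) * F (fst p, fst (snd p), sqrt (fst p) *\<^sub>R snd (snd p))) \<in> borel_measurable borel"
    using F unfolding borel_prod[symmetric] by measurable
  fix v :: real
  have [measurable]: "(\<lambda>y. F (v, y)) \<in> borel_measurable borel"
    "(\<lambda>y. F (v, fst y, sqrt v *\<^sub>R snd y)) \<in> borel_measurable borel"
    using F unfolding borel_prod[symmetric] by measurable
  show "(\<integral>\<^sup>+y. F (v, y) \<partial>lborel) =
    (\<integral>\<^sup>+y. ennreal (fst (v, y) powr (DIM('b) / 2)) * F (fst (v, y), fst (snd (v, y)), sqrt (fst (v, y)) *\<^sub>R snd (snd (v, y))) \<partial>lborel)"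
  proof (cases "v > 0")
    case True
    have "(\<integral>\<^sup>+y. F (v, y) \<partial>lborel) = ennreal (sqrt v ^ DIM('b)) * (\<integral>\<^sup>+y. F (v, fst y, sqrt v *\<^sub>R snd y) \<partial>lborel)"
      using True by (intro nn_integral_lborel_prod_scale_snd) auto
    with True show ?thesis
      by (simp add: nn_integral_cmult sqrt_power_eq_powr)
  qed (simp add: vanish)
qed

lemma nn_integral_lborel_shift_fibre:
  fixes F :: "real \<times> 'a::euclidean_space \<times> 'b::euclidean_space \<Rightarrow> ennreal"
  assumes F: "F \<in> borel_measurable borel"
  shows "(\<integral>\<^sup>+p. F p \<partial>lborel) = (\<integral>\<^sup>+p. F (fst p - (norm (snd (snd p)))\<^sup>2, snd p) \<partial>lborel)"
proof (rule nn_integral_lborel_prod_cong_snd)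
  show "F \<in> borel_measurable borel" "(\<lambda>p. F (fst p - (norm (snd (snd p)))\<^sup>2, snd p)) \<in> borel_measurable borel"
    using F unfolding borel_prod[symmetric] by measurable
  fix y :: "'a \<times> 'b"
  have "(\<lambda>v. F (v, y)) \<in> borel_measurable borel"
    using F unfolding borel_prod[symmetric] by measurable (simp add: space_pair_measure)
  from nn_integral_real_affine[OF this, of 1 "- (norm (snd y))\<^sup>2"]
  show "(\<integral>\<^sup>+v. F (v, y) \<partial>lborel) = (\<integral>\<^sup>+u. F (fst (u, y) - (norm (snd (snd (u, y))))\<^sup>2, snd (u, y)) \<partial>lborel)"
    by simp
qed

section \<open>The densities of \<open>(V\<^sub>0, T, R)\<close> and \<open>(T, R)\<close>\<close>

text \<open>
  \<open>vtr_map x\<close> is \<open>(V\<^sub>0, T, R)\<close> as a function of \<open>X = x\<close>, and \<open>vtx_density\<close>, \<open>vtr_density\<close>,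
  \<open>tr_density\<close> are the densities of \<open>(V, T, X\<^sub>2)\<close>, \<open>(V\<^sub>0, T, R)\<close> and \<open>(T, R)\<close>, where the
  parameters \<open>d\<^sub>i\<close> stand for the dimensions \<open>n\<^sub>i m\<close>.
\<close>

definition vtr_map :: "'a::real_normed_vector \<times> 'b::real_normed_vector \<times> 'c::real_normed_vector \<Rightarrow> real \<times> 'b \<times> 'c"
  where "vtr_map x = ((norm (fst x))\<^sup>2 + (norm (snd (snd x)))\<^sup>2,
     inverse (sqrt ((norm (fst x))\<^sup>2)) *\<^sub>R fst (snd x),
     inverse (sqrt ((norm (fst x))\<^sup>2 + (norm (snd (snd x)))\<^sup>2)) *\<^sub>R snd (snd x))"

definition vtx_density :: "real \<Rightarrow> real \<Rightarrow> (real \<Rightarrow> real) \<Rightarrow>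
    real \<times> 'a::real_normed_vector \<times> 'b::real_normed_vector \<Rightarrow> real" where
  "vtx_density d0 d1 h = (\<lambda>(v, t, z). indicator {0<..} v * (pi powr (d0 / 2) / Gamma (d0 / 2)) *
     v powr ((d0 + d1) / 2 - 1) * h (v * (1 + (norm t)\<^sup>2) + (norm z)\<^sup>2))"

definition vtr_density :: "real \<Rightarrow> real \<Rightarrow> real \<Rightarrow> (real \<Rightarrow> real) \<Rightarrow>
    real \<times> 'a::real_normed_vector \<times> 'b::real_normed_vector \<Rightarrow> real" where
  "vtr_density d0 d1 d2 h = (\<lambda>(v0, t, r). indicator {(v0', t', r'). v0' > 0 \<and> (norm r')\<^sup>2 < 1} (v0, t, r) *
     (pi powr (d0 / 2) * v0 powr ((d0 + d1 + d2) / 2 - 1) / Gamma (d0 / 2)) *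
     h (v0 * (1 + (1 - (norm r)\<^sup>2) * (norm t)\<^sup>2)) * (1 - (norm r)\<^sup>2) powr ((d0 + d1) / 2 - 1))"

definition tr_density :: "real \<Rightarrow> real \<Rightarrow> real \<Rightarrow> 'a::real_normed_vector \<times> 'b::real_normed_vector \<Rightarrow> real" where
  "tr_density d0 d1 d2 = (\<lambda>(t, r). indicator {(t', r'). (norm r')\<^sup>2 < 1} (t, r) *
     (Gamma ((d0 + d1 + d2) / 2) / (pi powr ((d1 + d2) / 2) * Gamma (d0 / 2))) *
     (1 + (1 - (norm r)\<^sup>2) * (norm t)\<^sup>2) powr (- ((d0 + d1 + d2) / 2)) *
     (1 - (norm r)\<^sup>2) powr ((d0 + d1) / 2 - 1))"

lemma borel_measurable_vtr_map[measurable]: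
  "(vtr_map :: 'a::euclidean_space \<times> 'b::euclidean_space \<times> 'c::euclidean_space \<Rightarrow> _) \<in> borel_measurable borel"
  unfolding vtr_map_def[abs_def] borel_prod[symmetric] by measurable

lemma borel_measurable_vtx_density[measurable]:
  fixes h :: "real \<Rightarrow> real"
  assumes [measurable]: "h \<in> borel_measurable borel"
  shows "(vtx_density d0 d1 h :: real \<times> 'a::euclidean_space \<times> 'b::euclidean_space \<Rightarrow> real) \<in> borel_measurable borel"
  unfolding vtx_density_def borel_prod[symmetric] by measurable

lemma borel_measurable_vtr_density[measurable]:
  fixes h :: "real \<Rightarrow> real"
  assumes [measurable]: "h \<in> borel_measurable borel"
  shows "(vtr_density d0 d1 d2 h :: real \<times> 'a::euclidean_space \<times> 'b::euclidean_space \<Rightarrow> real) \<in> borel_measurable borel"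
  unfolding vtr_density_def borel_prod[symmetric] by measurable

lemma borel_measurable_tr_density[measurable]:
  "(tr_density d0 d1 d2 :: 'a::euclidean_space \<times> 'b::euclidean_space \<Rightarrow> real) \<in> borel_measurable borel"
  unfolding tr_density_def borel_prod[symmetric] by measurable

lemma vtx_density_nonneg:
  assumes "d0 > 0" and h_nonneg: "\<And>t. t \<ge> 0 \<Longrightarrow> h t \<ge> 0"
  shows "vtx_density d0 d1 h (v, t, z) \<ge> 0"
proof (cases "v > 0")
  case True
  have "h (v * (1 + (norm t)\<^sup>2) + (norm z)\<^sup>2) \<ge> 0"
    using True by (intro h_nonneg add_nonneg_nonneg mult_nonneg_nonneg) auto
  moreover have "Gamma (d0 / 2) > 0"
    using \<open>d0 > 0\<close> by (simp add: Gamma_real_pos)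
  ultimately show ?thesis
    using True by (simp add: vtx_density_def)
qed (simp add: vtx_density_def)

lemma vtr_density_eq_vtx_density:
  assumes "u > 0"
  shows "u powr (d2 / 2) * vtx_density d0 d1 h (u - (norm (sqrt u *\<^sub>R r))\<^sup>2, t, sqrt u *\<^sub>R r) =
    vtr_density d0 d1 d2 h (u, t, r)"
proof -
  define w where "w = 1 - (norm r)\<^sup>2"
  define C where "C = pi powr (d0 / 2) / Gamma (d0 / 2)"
  have norm_sq: "(norm (sqrt u *\<^sub>R r))\<^sup>2 = u * (norm r)\<^sup>2"
    using assms by (simp add: power_mult_distrib)
  have shift: "u - (norm (sqrt u *\<^sub>R r))\<^sup>2 = u * w"
    and arg: "u * w * (1 + (norm t)\<^sup>2) + (norm (sqrt u *\<^sub>R r))\<^sup>2 = u * (1 + w * (norm t)\<^sup>2)"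
    unfolding norm_sq w_def by (simp_all add: algebra_simps)
  have vtx: "vtx_density d0 d1 h (u - (norm (sqrt u *\<^sub>R r))\<^sup>2, t, sqrt u *\<^sub>R r) =
      indicator {0<..} (u * w) * C * (u * w) powr ((d0 + d1) / 2 - 1) * h (u * (1 + w * (norm t)\<^sup>2))"
    unfolding vtx_density_def prod.case shift arg C_def ..
  show ?thesis
  proof (cases "w > 0")
    case True
    have "u powr (d2 / 2) * (indicator {0<..} (u * w) * C * (u * w) powr ((d0 + d1) / 2 - 1) *
        h (u * (1 + w * (norm t)\<^sup>2))) =
        C * (u powr (d2 / 2) * (u * w) powr ((d0 + d1) / 2 - 1)) * h (u * (1 + w * (norm t)\<^sup>2))"
      using assms True by simp
    also have "\<dots> = C * (u powr ((d0 + d1 + d2) / 2 - 1) * w powr ((d0 + d1) / 2 - 1)) * h (u * (1 + w * (norm t)\<^sup>2))"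
      using assms True by (simp add: powr_mult powr_add[symmetric] add_divide_distrib algebra_simps)
    also have "\<dots> = vtr_density d0 d1 d2 h (u, t, r)"
      using assms True by (simp add: vtr_density_def C_def w_def)
    finally show ?thesis
      unfolding vtx .
  next
    case False
    with assms show ?thesis
      unfolding vtx by (simp add: vtr_density_def w_def zero_less_mult_iff)
  qed
qed

lemma ennreal_mult_assoc3:
  "a \<ge> 0 \<Longrightarrow> b \<ge> 0 \<Longrightarrow> c \<ge> 0 \<Longrightarrow> ennreal a * (ennreal b * (ennreal c * G)) = ennreal (a * b * c) * G"
  by (simp add: ennreal_mult mult.assoc)

lemma nn_integral_vtx_density:
  fixes h :: "real \<Rightarrow> real" and G :: "real \<times> 'b::euclidean_space \<times> 'c::euclidean_space \<Rightarrow> ennreal"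
  assumes h: "h \<in> borel_measurable borel" and G: "G \<in> borel_measurable borel"
    and h_nonneg: "\<And>t. t \<ge> 0 \<Longrightarrow> h t \<ge> 0"
  defines "d0 \<equiv> real DIM('a::euclidean_space)" and "d1 \<equiv> real DIM('b)"
  shows "(\<integral>\<^sup>+x. ennreal (h ((norm x)\<^sup>2)) * G ((norm (fst x))\<^sup>2, inverse (norm (fst x)) *\<^sub>R fst (snd x), snd (snd x))
      \<partial>(lborel :: ('a \<times> 'b \<times> 'c) measure)) =
    (\<integral>\<^sup>+y. ennreal (vtx_density d0 d1 h y) * G y \<partial>lborel)"
proof -
  define C where "C = pi powr (d0 / 2) / Gamma (d0 / 2)"
  have "C > 0"
    unfolding C_def d0_def by (intro divide_pos_pos Gamma_real_pos) auto
  define F where "F = (\<lambda>(v, x1, x2). ennreal (h (v + (norm x1)\<^sup>2 + (norm x2)\<^sup>2)) * G (v, inverse (sqrt v) *\<^sub>R x1, x2))"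
  define F' where "F' = (\<lambda>q. ennreal (indicator {0<..} (fst q) * (C * fst q powr (d0 / 2 - 1))) * F q)"
  note [measurable] = h G
  have F: "F \<in> borel_measurable borel"
    unfolding F_def split_beta' borel_prod[symmetric] by measurable
  have [measurable]: "F' \<in> borel_measurable borel"
    using F unfolding F'_def borel_prod[symmetric] by measurable
  note [measurable] = F
  have "(\<integral>\<^sup>+x. ennreal (h ((norm x)\<^sup>2)) * G ((norm (fst x))\<^sup>2, inverse (norm (fst x)) *\<^sub>R fst (snd x), snd (snd x))
      \<partial>(lborel :: ('a \<times> 'b \<times> 'c) measure)) =
      (\<integral>\<^sup>+x. F ((norm (fst x))\<^sup>2, snd x) \<partial>(lborel :: ('a \<times> 'b \<times> 'c) measure))"
    by (intro nn_integral_cong) (auto simp: F_def norm_Pair add.assoc)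
  also have "\<dots> = (\<integral>\<^sup>+q. F' q \<partial>lborel)"
    unfolding F'_def C_def d0_def by (rule nn_integral_lborel_norm_square_fst) measurable
  also have "\<dots> = (\<integral>\<^sup>+p. ennreal (fst p powr (d1 / 2)) * F' (fst p, sqrt (fst p) *\<^sub>R fst (snd p), snd (snd p)) \<partial>lborel)"
    unfolding d1_def by (rule nn_integral_lborel_scale_fibre_fst) (measurable, simp add: F'_def)
  also have "\<dots> = (\<integral>\<^sup>+y. ennreal (vtx_density d0 d1 h y) * G y \<partial>lborel)"
  proof (intro nn_integral_cong)
    fix p :: "real \<times> 'b \<times> 'c"
    obtain v t z where p: "p = (v, t, z)" by (cases p)
    show "ennreal (fst p powr (d1 / 2)) * F' (fst p, sqrt (fst p) *\<^sub>R fst (snd p), snd (snd p)) =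
      ennreal (vtx_density d0 d1 h p) * G p"
    proof (cases "v > 0")
      case True
      have "h (v * (1 + (norm t)\<^sup>2) + (norm z)\<^sup>2) \<ge> 0"
        using True by (intro h_nonneg) auto
      moreover have powr_sum: "v powr (d1 / 2) * (C * v powr (d0 / 2 - 1)) = C * v powr ((d0 + d1) / 2 - 1)"
        by (simp add: powr_add[symmetric] add_divide_distrib algebra_simps)
      moreover have "(norm (sqrt v *\<^sub>R t))\<^sup>2 = v * (norm t)\<^sup>2" "inverse (sqrt v) *\<^sub>R sqrt v *\<^sub>R t = t"
        using True by (simp_all add: power_mult_distrib)
      moreover have "v + v * (norm t)\<^sup>2 + (norm z)\<^sup>2 = v * (1 + (norm t)\<^sup>2) + (norm z)\<^sup>2"
        by (simp add: algebra_simps)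
      ultimately show ?thesis
        using True \<open>C > 0\<close>
        by (simp add: p F'_def F_def vtx_density_def C_def[symmetric] ennreal_mult_assoc3 powr_sum)
    qed (simp add: p F'_def vtx_density_def)
  qed
  finally show ?thesis .
qed

lemma nn_integral_vtr_density:
  fixes h :: "real \<Rightarrow> real" and g :: "real \<times> 'a::euclidean_space \<times> 'b::euclidean_space \<Rightarrow> ennreal"
  assumes h: "h \<in> borel_measurable borel" and g: "g \<in> borel_measurable borel"
    and h_nonneg: "\<And>t. t \<ge> 0 \<Longrightarrow> h t \<ge> 0" and "d0 > 0"
  defines "d2 \<equiv> real DIM('b)"
  shows "(\<integral>\<^sup>+y. ennreal (vtx_density d0 d1 h y) *
      g (fst y + (norm (snd (snd y)))\<^sup>2, fst (snd y), inverse (sqrt (fst y + (norm (snd (snd y)))\<^sup>2)) *\<^sub>R snd (snd y))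
      \<partial>lborel) =
    (\<integral>\<^sup>+y. ennreal (vtr_density d0 d1 d2 h y) * g y \<partial>lborel)"
proof -
  define F where "F = (\<lambda>y::real \<times> 'a \<times> 'b. ennreal (vtx_density d0 d1 h y) *
      g (fst y + (norm (snd (snd y)))\<^sup>2, fst (snd y), inverse (sqrt (fst y + (norm (snd (snd y)))\<^sup>2)) *\<^sub>R snd (snd y)))"
  define F' where "F' = (\<lambda>p. F (fst p - (norm (snd (snd p)))\<^sup>2, snd p))"
  have [measurable]: "g \<in> borel_measurable (borel \<Otimes>\<^sub>M borel \<Otimes>\<^sub>M borel)"
    "(vtx_density d0 d1 h :: real \<times> 'a \<times> 'b \<Rightarrow> real) \<in> borel_measurable (borel \<Otimes>\<^sub>M borel \<Otimes>\<^sub>M borel)"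
    using g borel_measurable_vtx_density[OF h] by (simp_all add: borel_prod)
  have F: "F \<in> borel_measurable borel"
    unfolding F_def borel_prod[symmetric] by measurable
  have [measurable]: "F' \<in> borel_measurable borel"
    using F unfolding F'_def borel_prod[symmetric] by measurable
  note [measurable] = F
  have F'_vanish: "F' p = 0" if "fst p \<le> 0" for p :: "real \<times> 'a \<times> 'b"
  proof -
    have "fst p - (norm (snd (snd p)))\<^sup>2 \<le> 0"
      using that zero_le_power2[of "norm (snd (snd p))"] by linarith
    then show ?thesis
      by (simp add: F'_def F_def vtx_density_def split_beta')
  qed
  have "(\<integral>\<^sup>+y. F y \<partial>lborel) = (\<integral>\<^sup>+p. F' p \<partial>lborel)"
    unfolding F'_def by (rule nn_integral_lborel_shift_fibre) measurable
  also have "\<dots> = (\<integral>\<^sup>+p. ennreal (fst p powr (d2 / 2)) * F' (fst p, fst (snd p), sqrt (fst p) *\<^sub>R snd (snd p)) \<partial>lborel)"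
    unfolding d2_def by (rule nn_integral_lborel_scale_fibre_snd) (measurable, fact F'_vanish)
  also have "\<dots> = (\<integral>\<^sup>+y. ennreal (vtr_density d0 d1 d2 h y) * g y \<partial>lborel)"
  proof (intro nn_integral_cong)
    fix p :: "real \<times> 'a \<times> 'b"
    obtain u t r where p: "p = (u, t, r)" by (cases p)
    show "ennreal (fst p powr (d2 / 2)) * F' (fst p, fst (snd p), sqrt (fst p) *\<^sub>R snd (snd p)) =
      ennreal (vtr_density d0 d1 d2 h p) * g p"
    proof (cases "u > 0")
      case True
      have "inverse (sqrt u) *\<^sub>R sqrt u *\<^sub>R r = r"
        using True by simp
      moreover have "vtx_density d0 d1 h (u - (norm (sqrt u *\<^sub>R r))\<^sup>2, t, sqrt u *\<^sub>R r) \<ge> 0"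
        using \<open>d0 > 0\<close> h_nonneg by (rule vtx_density_nonneg)
      ultimately show ?thesis
        using True vtr_density_eq_vtx_density[OF True, of d2 d0 d1 h r t]
        by (simp add: p F'_def F_def mult.assoc[symmetric] flip: ennreal_mult)
    next
      case False
      then show ?thesis
        using F'_vanish[of "(u, t, sqrt u *\<^sub>R r)"] by (simp add: p vtr_density_def)
    qed
  qed
  finally show ?thesis
    by (simp add: F_def)
qed

lemma nn_integral_vtr_map:
  fixes h :: "real \<Rightarrow> real" and g :: "real \<times> 'b::euclidean_space \<times> 'c::euclidean_space \<Rightarrow> ennreal"
  assumes h: "h \<in> borel_measurable borel" and g: "g \<in> borel_measurable borel"
    and h_nonneg: "\<And>t. t \<ge> 0 \<Longrightarrow> h t \<ge> 0"
  defines "d0 \<equiv> real DIM('a::euclidean_space)" and "d1 \<equiv> real DIM('b)" and "d2 \<equiv> real DIM('c)"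
  shows "(\<integral>\<^sup>+x. ennreal (h ((norm x)\<^sup>2)) * g (vtr_map x) \<partial>(lborel :: ('a \<times> 'b \<times> 'c) measure)) =
    (\<integral>\<^sup>+y. ennreal (vtr_density d0 d1 d2 h y) * g y \<partial>lborel)"
proof -
  define G where "G = (\<lambda>y::real \<times> 'b \<times> 'c. g (fst y + (norm (snd (snd y)))\<^sup>2, fst (snd y),
    inverse (sqrt (fst y + (norm (snd (snd y)))\<^sup>2)) *\<^sub>R snd (snd y)))"
  have [measurable]: "g \<in> borel_measurable (borel \<Otimes>\<^sub>M borel \<Otimes>\<^sub>M borel)"
    using g by (simp add: borel_prod)
  have "G \<in> borel_measurable borel"
    unfolding G_def borel_prod[symmetric] by measurable
  have "(\<integral>\<^sup>+x. ennreal (h ((norm x)\<^sup>2)) * g (vtr_map x) \<partial>(lborel :: ('a \<times> 'b \<times> 'c) measure)) =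
      (\<integral>\<^sup>+x. ennreal (h ((norm x)\<^sup>2)) * G ((norm (fst x))\<^sup>2, inverse (norm (fst x)) *\<^sub>R fst (snd x), snd (snd x))
        \<partial>(lborel :: ('a \<times> 'b \<times> 'c) measure))"
    by (simp add: G_def vtr_map_def)
  also have "\<dots> = (\<integral>\<^sup>+y. ennreal (vtx_density d0 d1 h y) * G y \<partial>lborel)"
    unfolding d0_def d1_def using h \<open>G \<in> _\<close> h_nonneg by (rule nn_integral_vtx_density)
  also have "\<dots> = (\<integral>\<^sup>+y. ennreal (vtr_density d0 d1 d2 h y) * g y \<partial>lborel)"
    unfolding G_def d2_def by (rule nn_integral_vtr_density) (use h g h_nonneg in \<open>auto simp: d0_def\<close>)
  finally show ?thesis .
qed

lemma nn_integral_vtr_density_fst: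
  fixes h :: "real \<Rightarrow> real" and t :: "'a::real_normed_vector" and r :: "'b::real_normed_vector"
  assumes [measurable]: "h \<in> borel_measurable borel" and h_nonneg: "\<And>t. t \<ge> 0 \<Longrightarrow> h t \<ge> 0"
    and "d0 > 0" "d1 \<ge> 0" "d2 \<ge> 0"
    and normalised: "(\<integral>\<^sup>+u. ennreal (indicator {0<..} u * u powr ((d0 + d1 + d2) / 2 - 1)) * ennreal (h u) \<partial>lborel) =
      ennreal (Gamma ((d0 + d1 + d2) / 2) / pi powr ((d0 + d1 + d2) / 2))"
  shows "(\<integral>\<^sup>+v0. ennreal (vtr_density d0 d1 d2 h (v0, t, r)) \<partial>lborel) = ennreal (tr_density d0 d1 d2 (t, r))"
proof (cases "(norm r)\<^sup>2 < 1")
  case True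
  define D where "D = d0 + d1 + d2"
  define k where "k = 1 + (1 - (norm r)\<^sup>2) * (norm t)\<^sup>2"
  define A where "A = pi powr (d0 / 2) / Gamma (d0 / 2) * (1 - (norm r)\<^sup>2) powr ((d0 + d1) / 2 - 1)"
  have "k \<ge> 1"
    unfolding k_def using True by simp
  have "A \<ge> 0"
    unfolding A_def using \<open>d0 > 0\<close> by (simp add: Gamma_real_pos less_imp_le)
  have "(\<integral>\<^sup>+v0. ennreal (vtr_density d0 d1 d2 h (v0, t, r)) \<partial>lborel) =
      (\<integral>\<^sup>+v0. ennreal A * (ennreal (indicator {0<..} v0 * v0 powr (D / 2 - 1)) * ennreal (h (v0 * k))) \<partial>lborel)"
  proof (intro nn_integral_cong)
    fix v0 :: real
    show "ennreal (vtr_density d0 d1 d2 h (v0, t, r)) =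
      ennreal A * (ennreal (indicator {0<..} v0 * v0 powr (D / 2 - 1)) * ennreal (h (v0 * k)))"
    proof (cases "v0 > 0")
      case True
      then have "h (v0 * k) \<ge> 0"
        using \<open>k \<ge> 1\<close> by (intro h_nonneg) simp
      with True \<open>(norm r)\<^sup>2 < 1\<close> \<open>A \<ge> 0\<close> show ?thesis
        by (simp add: vtr_density_def A_def D_def k_def mult_ac flip: ennreal_mult ennreal_mult')
    qed (simp add: vtr_density_def)
  qed
  also have "\<dots> = ennreal A * ennreal (k powr (- (D / 2))) * ennreal (Gamma (D / 2) / pi powr (D / 2))"
    using \<open>k \<ge> 1\<close> nn_integral_powr_dilation[of "\<lambda>u. ennreal (h u)" k "D / 2"] normalised
    by (simp add: nn_integral_cmult D_def mult.assoc)
  also have "\<dots> = ennreal (A * k powr (- (D / 2)) * (Gamma (D / 2) / pi powr (D / 2)))"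
    using \<open>A \<ge> 0\<close> \<open>d0 > 0\<close> \<open>d1 \<ge> 0\<close> \<open>d2 \<ge> 0\<close>
    by (simp add: D_def Gamma_real_pos less_imp_le flip: ennreal_mult)
  also have "A * k powr (- (D / 2)) * (Gamma (D / 2) / pi powr (D / 2)) = tr_density d0 d1 d2 (t, r)"
  proof -
    have "pi powr (D / 2) = pi powr (d0 / 2) * pi powr ((d1 + d2) / 2)"
      by (simp add: D_def powr_add[symmetric] add_divide_distrib add.assoc)
    moreover have "Gamma (d0 / 2) > 0"
      using \<open>d0 > 0\<close> by (simp add: Gamma_real_pos)
    ultimately show ?thesis
      using True by (simp add: tr_density_def A_def D_def k_def field_simps)
  qed
  finally show ?thesis .
qed (simp add: vtr_density_def tr_density_def)

lemma nn_integral_vtr_map_snd: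
  fixes h :: "real \<Rightarrow> real" and g :: "'b::euclidean_space \<times> 'c::euclidean_space \<Rightarrow> ennreal"
  assumes h: "h \<in> borel_measurable borel" and g: "g \<in> borel_measurable borel"
    and h_nonneg: "\<And>t. t \<ge> 0 \<Longrightarrow> h t \<ge> 0"
    and normalised: "(\<integral>\<^sup>+x. ennreal (h ((norm x)\<^sup>2)) \<partial>(lborel :: ('a::euclidean_space \<times> 'b \<times> 'c) measure)) = 1"
  defines "d0 \<equiv> real DIM('a)" and "d1 \<equiv> real DIM('b)" and "d2 \<equiv> real DIM('c)"
  shows "(\<integral>\<^sup>+x. ennreal (h ((norm x)\<^sup>2)) * g (snd (vtr_map x)) \<partial>(lborel :: ('a \<times> 'b \<times> 'c) measure)) =
    (\<integral>\<^sup>+q. ennreal (tr_density d0 d1 d2 q) * g q \<partial>lborel)"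
proof -
  note [measurable] = h g
  have g_snd[measurable]: "(\<lambda>y::real \<times> 'b \<times> 'c. g (snd y)) \<in> borel_measurable borel"
    using g unfolding borel_prod[symmetric] by measurable
  have radial: "(\<integral>\<^sup>+u. ennreal (indicator {0<..} u * u powr ((d0 + d1 + d2) / 2 - 1)) * ennreal (h u) \<partial>lborel) =
      ennreal (Gamma ((d0 + d1 + d2) / 2) / pi powr ((d0 + d1 + d2) / 2))"
    using nn_integral_lborel_normalised_radial[OF h normalised]
    by (simp add: d0_def d1_def d2_def add.assoc)
  have "(\<integral>\<^sup>+x. ennreal (h ((norm x)\<^sup>2)) * g (snd (vtr_map x)) \<partial>(lborel :: ('a \<times> 'b \<times> 'c) measure)) =
      (\<integral>\<^sup>+y. ennreal (vtr_density d0 d1 d2 h y) * g (snd y) \<partial>lborel)"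
    unfolding d0_def d1_def d2_def using h g_snd h_nonneg by (rule nn_integral_vtr_map)
  also have "\<dots> = (\<integral>\<^sup>+q. \<integral>\<^sup>+v0. ennreal (vtr_density d0 d1 d2 h (v0, q)) * g q \<partial>lborel \<partial>lborel)"
    by (rule nn_integral_lborel_prod_snd[where f="\<lambda>y. ennreal (vtr_density d0 d1 d2 h y) * g (snd y)", simplified])
      measurable
  also have "\<dots> = (\<integral>\<^sup>+q. ennreal (tr_density d0 d1 d2 q) * g q \<partial>lborel)"
  proof (intro nn_integral_cong)
    fix q :: "'b \<times> 'c"
    have "(\<lambda>v0. ennreal (vtr_density d0 d1 d2 h (v0, q))) \<in> borel_measurable borel"
      using borel_measurable_vtr_density[OF h] unfolding borel_prod[symmetric] by measurable
    then show "(\<integral>\<^sup>+v0. ennreal (vtr_density d0 d1 d2 h (v0, q)) * g q \<partial>lborel) = ennreal (tr_density d0 d1 d2 q) * g q"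
      using nn_integral_vtr_density_fst[OF h h_nonneg _ _ _ radial, of "fst q" "snd q"]
      by (simp add: nn_integral_multc d0_def d1_def d2_def)
  qed
  finally show ?thesis .
qed

lemma distributed_image:
  assumes X: "distributed M N X f" and T: "T \<in> measurable N P" and g: "g \<in> borel_measurable P"
    and eq: "\<And>A. A \<in> sets P \<Longrightarrow> (\<integral>\<^sup>+x. f x * indicator A (T x) \<partial>N) = (\<integral>\<^sup>+y. g y * indicator A y \<partial>P)"
  shows "distributed M P (\<lambda>\<omega>. T (X \<omega>)) g"
proof -
  have TX: "(\<lambda>\<omega>. T (X \<omega>)) \<in> measurable M P"
    using measurable_compose[OF distributed_measurable[OF X] T] .
  have "distr M P (\<lambda>\<omega>. T (X \<omega>)) = density P g"
  proof (rule measure_eqI)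
    fix A assume "A \<in> sets (distr M P (\<lambda>\<omega>. T (X \<omega>)))"
    then have A: "A \<in> sets P" by simp
    have "emeasure (distr M P (\<lambda>\<omega>. T (X \<omega>))) A = emeasure M ((\<lambda>\<omega>. T (X \<omega>)) -` A \<inter> space M)"
      using TX A by (rule emeasure_distr)
    also have "\<dots> = (\<integral>\<^sup>+\<omega>. indicator ((\<lambda>\<omega>. T (X \<omega>)) -` A) \<omega> \<partial>M)"
      using TX A by (simp add: nn_integral_indicator' measurable_sets)
    also have "\<dots> = (\<integral>\<^sup>+x. f x * indicator A (T x) \<partial>N)"
      using X T A by (simp add: indicator_vimage distributed_nn_integral)
    also have "\<dots> = emeasure (density P g) A"
      using A g by (simp add: eq emeasure_density)
    finally show "emeasure (distr M P (\<lambda>\<omega>. T (X \<omega>))) A = emeasure (density P g) A" .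
  qed simp
  with TX g show ?thesis
    by (simp add: distributed_def)
qed

lemma distributed_vtr_map:
  fixes X :: "'s \<Rightarrow> 'a::euclidean_space \<times> 'b::euclidean_space \<times> 'c::euclidean_space"
    and h :: "real \<Rightarrow> real"
  assumes "prob_space M" and h: "h \<in> borel_measurable borel" and h_nonneg: "\<And>t. t \<ge> 0 \<Longrightarrow> h t \<ge> 0"
    and X: "distributed M lborel X (\<lambda>x. ennreal (h ((norm x)\<^sup>2)))"
  defines "d0 \<equiv> real DIM('a)" and "d1 \<equiv> real DIM('b)" and "d2 \<equiv> real DIM('c)"
  shows "distributed M lborel (\<lambda>\<omega>. vtr_map (X \<omega>)) (\<lambda>y. ennreal (vtr_density d0 d1 d2 h y))"
    and "distributed M lborel (\<lambda>\<omega>. snd (vtr_map (X \<omega>))) (\<lambda>q. ennreal (tr_density d0 d1 d2 q))"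
proof -
  note [measurable] = h
  have normalised: "(\<integral>\<^sup>+x. ennreal (h ((norm x)\<^sup>2)) \<partial>(lborel :: ('a \<times> 'b \<times> 'c) measure)) = 1"
    using distributed_nn_integral[OF X, of "\<lambda>_. 1"] prob_space.emeasure_space_1[OF \<open>prob_space M\<close>] by simp
  have [measurable]: "(\<lambda>x::'a \<times> 'b \<times> 'c. snd (vtr_map x)) \<in> borel_measurable borel"
    unfolding vtr_map_def borel_prod[symmetric] by measurable
  show "distributed M lborel (\<lambda>\<omega>. vtr_map (X \<omega>)) (\<lambda>y. ennreal (vtr_density d0 d1 d2 h y))"
  proof (rule distributed_image[OF X])
    fix A :: "(real \<times> 'b \<times> 'c) set"
    assume "A \<in> sets lborel"
    then have "indicator A \<in> borel_measurable borel"
      by simp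
    then show "(\<integral>\<^sup>+x. ennreal (h ((norm x)\<^sup>2)) * indicator A (vtr_map x) \<partial>(lborel :: ('a \<times> 'b \<times> 'c) measure)) =
        (\<integral>\<^sup>+y. ennreal (vtr_density d0 d1 d2 h y) * indicator A y \<partial>lborel)"
      unfolding d0_def d1_def d2_def by (rule nn_integral_vtr_map[OF h _ h_nonneg])
  qed simp_all
  show "distributed M lborel (\<lambda>\<omega>. snd (vtr_map (X \<omega>))) (\<lambda>q. ennreal (tr_density d0 d1 d2 q))"
  proof (rule distributed_image[OF X])
    fix A :: "('b \<times> 'c) set"
    assume "A \<in> sets lborel"
    then have "indicator A \<in> borel_measurable borel"
      by simp
    then show "(\<integral>\<^sup>+x. ennreal (h ((norm x)\<^sup>2)) * indicator A (snd (vtr_map x)) \<partial>(lborel :: ('a \<times> 'b \<times> 'c) measure)) =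
        (\<integral>\<^sup>+q. ennreal (tr_density d0 d1 d2 q) * indicator A q \<partial>lborel)"
      unfolding d0_def d1_def d2_def by (rule nn_integral_vtr_map_snd[OF h _ h_nonneg normalised])
  qed simp_all
qed

theorem theorem8:
  fixes M :: "'a measure"
    and h :: "real \<Rightarrow> real"
    and X :: "'a \<Rightarrow> (real^'m^'n0) \<times> (real^'m^'n1) \<times> (real^'m^'n2)"
  defines "n0 \<equiv> real CARD('n0)"
    and "n1 \<equiv> real CARD('n1)"
    and "m \<equiv> real CARD('m)"
    and "N \<equiv> real (CARD('n0) + CARD('n1) + CARD('n2))"
    and "V \<equiv> \<lambda>\<omega>. (norm (fst (X \<omega>)))\<^sup>2"
    and "V0 \<equiv> \<lambda>\<omega>. (norm (fst (X \<omega>)))\<^sup>2 + (norm (snd (snd (X \<omega>))))\<^sup>2"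
  defines "T \<equiv> \<lambda>\<omega>. inverse (sqrt (V \<omega>)) *\<^sub>R fst (snd (X \<omega>))"
    and "R \<equiv> \<lambda>\<omega>. inverse (sqrt (V0 \<omega>)) *\<^sub>R snd (snd (X \<omega>))"
  assumes "prob_space M"
    and "CARD('m) \<le> CARD('n0)" and "CARD('m) \<le> CARD('n1)" and "CARD('m) \<le> CARD('n2)"
    and "h \<in> borel_measurable borel"
    and "\<And>t. t \<ge> 0 \<Longrightarrow> h t \<ge> 0"
    and "distributed M lborel X
           (\<lambda>x. ennreal (h ((norm (fst x))\<^sup>2 + (norm (fst (snd x)))\<^sup>2 + (norm (snd (snd x)))\<^sup>2)))"
  shows "distributed M lborel (\<lambda>\<omega>. (V0 \<omega>, T \<omega>, R \<omega>))
           (\<lambda>(v0, t, r). ennreal (indicator {(v0', t', r'). v0' > 0 \<and> (norm r')\<^sup>2 < 1} (v0, t, r) *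
              (pi powr (n0 * m / 2) * v0 powr (N * m / 2 - 1) / Gamma (n0 * m / 2)) *
              h (v0 * (1 + (1 - (norm r)\<^sup>2) * (norm t)\<^sup>2)) *
              (1 - (norm r)\<^sup>2) powr ((n0 + n1) * m / 2 - 1)))
         \<and> distributed M lborel (\<lambda>\<omega>. (T \<omega>, R \<omega>))
           (\<lambda>(t, r). ennreal (indicator {(t', r'). (norm r')\<^sup>2 < 1} (t, r) *
              (Gamma (N * m / 2) / (pi powr ((N - n0) * m / 2) * Gamma (n0 * m / 2))) *
              (1 + (1 - (norm r)\<^sup>2) * (norm t)\<^sup>2) powr (- (N * m / 2)) *
              (1 - (norm r)\<^sup>2) powr ((n0 + n1) * m / 2 - 1)))"
proof -
  define n2 where "n2 = real CARD('n2)"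
  have "(\<lambda>x::(real^'m^'n0) \<times> (real^'m^'n1) \<times> (real^'m^'n2). ennreal (h ((norm x)\<^sup>2))) =
      (\<lambda>x. ennreal (h ((norm (fst x))\<^sup>2 + (norm (fst (snd x)))\<^sup>2 + (norm (snd (snd x)))\<^sup>2)))"
    by (auto simp: norm_Pair add.assoc)
  with assms(15) have X: "distributed M lborel X (\<lambda>x. ennreal (h ((norm x)\<^sup>2)))"
    by simp
  have maps: "(\<lambda>\<omega>. (V0 \<omega>, T \<omega>, R \<omega>)) = (\<lambda>\<omega>. vtr_map (X \<omega>))" "(\<lambda>\<omega>. (T \<omega>, R \<omega>)) = (\<lambda>\<omega>. snd (vtr_map (X \<omega>)))"
    by (simp_all add: vtr_map_def V0_def V_def T_def R_def)
  have dims: "real DIM(real^'m^'n0) = n0 * m" "real DIM(real^'m^'n1) = n1 * m" "real DIM(real^'m^'n2) = n2 * m"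
    by (simp_all add: n0_def n1_def n2_def m_def)
  have params: "N * m = n0 * m + n1 * m + n2 * m" "(N - n0) * m = n1 * m + n2 * m"
    "(n0 + n1) * m = n0 * m + n1 * m"
    by (simp_all add: N_def n0_def n1_def n2_def algebra_simps)
  show ?thesis
    using distributed_vtr_map[OF assms(9,13,14) X] unfolding maps dims params
    by (simp add: vtr_density_def tr_density_def split_beta')
qed

end
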